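(* Let $A\in\mathbb R^{d^2\times d^2}$ and let $x=x_1\otimes x_2$, where $x_1,x_2\in\mathbb R^d$ are independent, each a Rademacher vector or a $\mathcal N(0,I_d)$ vector. Let $\bar A=\frac14\big(A+A^{\Gamma_{\{1\}}}+A^{\Gamma_{\{2\}}}+A^\top\big)$. Then $$\operatorname{Var}[x^\top Ax]\le 2\|\operatorname{tr}_{\{1\}}(\bar A)\|_F^2+2\|\operatorname{tr}_{\{2\}}(\bar A)\|_F^2+4\|\bar A\|_F^2 .$$ Moreover, there is an absolute constant $C$ such that if $A$ is PSD, $\varepsilon\in(0,1)$ and $\ell\ge C\varepsilon^{-2}$, then with probability at least $2/3$ the Kronecker–Hutchinson estimator satisfies $|H_\ell(A)-\operatorname{tr}(A)|\le\varepsilon\operatorname{tr}(A)$.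
   Context: Write $A\in\mathbb R^{d^2\times d^2}$ as a $d\times d$ block matrix with blocks $A_{ij}\in\mathbb R^{d\times d}$. Then $\operatorname{tr}_{\{1\}}(A)=\sum_{i=1}^dA_{ii}$, $\operatorname{tr}_{\{2\}}(A)$ is the $d\times d$ matrix with $(i,j)$ entry $\operatorname{tr}(A_{ij})$, $A^{\Gamma_{\{1\}}}$ is the block matrix with $(i,j)$ block $A_{ji}$, and $A^{\Gamma_{\{2\}}}$ is the block matrix with $(i,j)$ block $A_{ij}^\top$. A Rademacher vector has iid entries uniform on $\{\pm1\}$. $H_\ell(A)=\frac1\ell\sum_{j=1}^\ell (x^{(j)})^\top Ax^{(j)}$ with $x^{(j)}$ iid copies of $x$. *)

theory Defs
  imports "HOL-Probability.Probability"
begin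

text \<open>Matrices in R^(d^2 x d^2) are functions on index pairs (i,a), i,a < d;
  row index (i,a) = row a of block row i. Vectors in R^d are functions nat => real.\<close>

type_synonym bmat = "nat \<times> nat \<Rightarrow> nat \<times> nat \<Rightarrow> real"

definition ptr1 :: "nat \<Rightarrow> bmat \<Rightarrow> nat \<Rightarrow> nat \<Rightarrow> real" where
  "ptr1 d A a b = (\<Sum>i<d. A (i,a) (i,b))"

definition ptr2 :: "nat \<Rightarrow> bmat \<Rightarrow> nat \<Rightarrow> nat \<Rightarrow> real" where
  "ptr2 d A i j = (\<Sum>a<d. A (i,a) (j,a))"

definition ptrans1 :: "bmat \<Rightarrow> bmat" where
  "ptrans1 A = (\<lambda>(i,a) (j,b). A (j,a) (i,b))"

definition ptrans2 :: "bmat \<Rightarrow> bmat" where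
  "ptrans2 A = (\<lambda>(i,a) (j,b). A (i,b) (j,a))"

definition btrans :: "bmat \<Rightarrow> bmat" where
  "btrans A = (\<lambda>p q. A q p)"

definition sym_bar :: "bmat \<Rightarrow> bmat" where
  "sym_bar A = (\<lambda>p q. (A p q + ptrans1 A p q + ptrans2 A p q + btrans A p q) / 4)"

definition frob_sq :: "nat \<Rightarrow> (nat \<Rightarrow> nat \<Rightarrow> real) \<Rightarrow> real" where
  "frob_sq d M = (\<Sum>i<d. \<Sum>j<d. (M i j)\<^sup>2)"

definition bfrob_sq :: "nat \<Rightarrow> bmat \<Rightarrow> real" where
  "bfrob_sq d A = (\<Sum>p\<in>{..<d}\<times>{..<d}. \<Sum>q\<in>{..<d}\<times>{..<d}. (A p q)\<^sup>2)"

definition btrace :: "nat \<Rightarrow> bmat \<Rightarrow> real" where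
  "btrace d A = (\<Sum>p\<in>{..<d}\<times>{..<d}. A p p)"

definition kron :: "(nat \<Rightarrow> real) \<Rightarrow> (nat \<Rightarrow> real) \<Rightarrow> nat \<times> nat \<Rightarrow> real" where
  "kron u v = (\<lambda>(i,a). u i * v a)"

definition qform :: "nat \<Rightarrow> bmat \<Rightarrow> (nat \<times> nat \<Rightarrow> real) \<Rightarrow> real" where
  "qform d A x = (\<Sum>p\<in>{..<d}\<times>{..<d}. \<Sum>q\<in>{..<d}\<times>{..<d}. x p * A p q * x q)"

definition bpsd :: "nat \<Rightarrow> bmat \<Rightarrow> bool" where
  "bpsd d A \<longleftrightarrow> (\<forall>p\<in>{..<d}\<times>{..<d}. \<forall>q\<in>{..<d}\<times>{..<d}. A p q = A q p)
                 \<and> (\<forall>x. 0 \<le> qform d A x)"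

definition rademacher :: "real measure" where
  "rademacher = measure_pmf (pmf_of_set {-1, 1})"

definition rad_vec :: "nat \<Rightarrow> (nat \<Rightarrow> real) measure" where
  "rad_vec d = PiM {..<d} (\<lambda>_. rademacher)"

definition gauss_vec :: "nat \<Rightarrow> (nat \<Rightarrow> real) measure" where
  "gauss_vec d = PiM {..<d} (\<lambda>_. std_normal_distribution)"

definition pair_dist :: "(nat \<Rightarrow> real) measure \<Rightarrow> (nat \<Rightarrow> real) measure \<Rightarrow> ((nat \<Rightarrow> real) \<times> (nat \<Rightarrow> real)) measure" where
  "pair_dist D1 D2 = D1 \<Otimes>\<^sub>M D2"

definition hutch :: "nat \<Rightarrow> bmat \<Rightarrow> nat \<Rightarrow> (nat \<Rightarrow> (nat \<Rightarrow> real) \<times> (nat \<Rightarrow> real)) \<Rightarrow> real" where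
  "hutch d A l \<omega> = (1 / real l) * (\<Sum>j<l. qform d A (kron (fst (\<omega> j)) (snd (\<omega> j))))"

end

theory Submission
  imports Defs
begin

text \<open>
  Let S = sym_bar A. The partial transposes leave the quadratic form at a Kronecker vector
  unchanged, so (u \<otimes> v)^T A (u \<otimes> v) = u^T M_v u with the matrix
  M_v(i,j) = \<Sum>_(a,b) v_a v_b S((i,a),(j,b)), which is symmetric in i and j.
  Rademacher and Gaussian coordinates have moments 0, 1, 0, 3 + \<kappa> with excess kurtosis
  \<kappa> = -2 resp. 0, so Isserlis' formula gives, for symmetric M,
  E (x^T M x)^2 = (tr M)^2 + 2 |M|_F^2 + \<kappa> \<Sum>_i M_ii^2 \<le> (tr M)^2 + 2 |M|_F^2.
  Applying this first in u for fixed v, and then in v (tr M_v and every M_v(i,j) are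
  quadratic forms in v, with matrices tr_1 S and S_ij), bounds the second moment by
  tr(A)^2 + 2 |tr_1 S|_F^2 + 2 |tr_2 S|_F^2 + 4 |S|_F^2, while the mean is tr A.
  For PSD A the inequality A_pq^2 \<le> A_pp A_qq bounds each of these three norms by tr(A)^2,
  so the variance is at most 8 tr(A)^2, and Chebyshev's inequality for the mean of
  l \<ge> 24/\<epsilon>^2 samples gives the estimate with C = 24.
\<close>

section \<open>Distributions with standardised moments\<close>

text \<open>\<open>\<kappa>\<close> is the excess kurtosis; values for \<open>n > 4\<close> are never used.\<close>

definition std_moment :: "real \<Rightarrow> nat \<Rightarrow> real" where
  "std_moment \<kappa> n = (if n = 0 \<or> n = 2 then 1 else if n = 4 then 3 + \<kappa> else 0)"

definition has_std_moments :: "real measure \<Rightarrow> real \<Rightarrow> bool" where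
  "has_std_moments \<mu> \<kappa> \<longleftrightarrow> prob_space \<mu> \<and>
     (\<forall>n\<le>4. integrable \<mu> (\<lambda>t. t ^ n) \<and> (\<integral>t. t ^ n \<partial>\<mu>) = std_moment \<kappa> n)"

lemma has_std_moments_rademacher: "has_std_moments rademacher (-2)"
  unfolding has_std_moments_def
proof (intro conjI allI impI)
  show "prob_space rademacher"
    unfolding rademacher_def by (rule prob_space_measure_pmf)
  fix n :: nat assume "n \<le> 4"
  show "integrable rademacher (\<lambda>t. t ^ n)"
    unfolding rademacher_def by (rule integrable_measure_pmf_finite) simp
  have "(\<integral>t. t ^ n \<partial>rademacher) = ((-1) ^ n + 1) / 2"
    unfolding rademacher_def by (subst integral_pmf_of_set) auto
  also have "\<dots> = std_moment (-2) n"
    using \<open>n \<le> 4\<close> by (auto simp: std_moment_def le_Suc_eq numeral_eq_Suc)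
  finally show "(\<integral>t. t ^ n \<partial>rademacher) = std_moment (-2) n" .
qed

lemma has_std_moments_std_normal: "has_std_moments std_normal_distribution 0"
  unfolding has_std_moments_def
proof (intro conjI allI impI)
  show "prob_space std_normal_distribution"
    using real_dist_normal_dist by (simp add: real_distribution_def)
  fix n :: nat assume "n \<le> 4"
  show "integrable std_normal_distribution (\<lambda>t. t ^ n)"
    by (rule integrable_std_normal_distribution_moment)
  have "n \<in> {0, 2, 4} \<or> n \<in> {1, 3}"
    using \<open>n \<le> 4\<close> by (auto simp: le_Suc_eq numeral_eq_Suc)
  then show "(\<integral>t. t ^ n \<partial>std_normal_distribution) = std_moment 0 n"
    using std_normal_distribution_even_moments(1)[of 0] std_normal_distribution_even_moments(1)[of 1]
      std_normal_distribution_even_moments(1)[of 2]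
      integral_std_normal_distribution_moment_odd[of 1] integral_std_normal_distribution_moment_odd[of 3]
    by (auto simp: std_moment_def fact_numeral)
qed

lemma prob_space_PiM_std_moments: "has_std_moments \<mu> \<kappa> \<Longrightarrow> prob_space (PiM I (\<lambda>_. \<mu>))"
  unfolding has_std_moments_def by (auto intro: prob_space_PiM)

lemma
  fixes f :: "'i \<Rightarrow> 'a \<Rightarrow> real"
  assumes "prob_space P" "finite I" "\<And>i. i \<in> I \<Longrightarrow> integrable P (f i)"
  shows integrable_iid_prod: "integrable (PiM I (\<lambda>_. P)) (\<lambda>x. \<Prod>i\<in>I. f i (x i))"
    and integral_iid_prod: "(\<integral>x. (\<Prod>i\<in>I. f i (x i)) \<partial>PiM I (\<lambda>_. P)) = (\<Prod>i\<in>I. integral\<^sup>L P (f i))"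
proof -
  interpret prob_space P by fact
  interpret product_prob_space "\<lambda>_. P" I by unfold_locales
  show "integrable (PiM I (\<lambda>_. P)) (\<lambda>x. \<Prod>i\<in>I. f i (x i))"
    using assms(2,3) by (rule product_integrable_prod)
  show "(\<integral>x. (\<Prod>i\<in>I. f i (x i)) \<partial>PiM I (\<lambda>_. P)) = (\<Prod>i\<in>I. integral\<^sup>L P (f i))"
    using assms(2,3) by (rule product_integral_prod)
qed

lemma prod_list_map_eq_prod_power_count:
  fixes x :: "'a \<Rightarrow> 'b::comm_monoid_mult"
  assumes "finite I" "set xs \<subseteq> I"
  shows "prod_list (map x xs) = (\<Prod>m\<in>I. x m ^ count_list xs m)"
  using assms(2)
proof (induction xs)
  case (Cons a xs)
  have "(\<Prod>m\<in>I. x m ^ count_list (a # xs) m) = (\<Prod>m\<in>I. if m = a then x m else 1) * (\<Prod>m\<in>I. x m ^ count_list xs m)"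
    by (auto simp: prod.distrib[symmetric] intro!: prod.cong)
  also have "(\<Prod>m\<in>I. if m = a then x m else 1) = x a"
    using Cons.prems assms(1) by (simp add: prod.delta)
  finally show ?case using Cons by simp
qed simp

lemma
  fixes d :: nat
  assumes "has_std_moments \<mu> \<kappa>" "set xs \<subseteq> {..<d}" "length xs \<le> 4"
  shows integrable_iid_mixed_moment: "integrable (PiM {..<d} (\<lambda>_. \<mu>)) (\<lambda>x. prod_list (map x xs))"
    and integral_iid_mixed_moment:
      "(\<integral>x. prod_list (map x xs) \<partial>PiM {..<d} (\<lambda>_. \<mu>)) = (\<Prod>m\<in>set xs. std_moment \<kappa> (count_list xs m))"
proof -
  have \<mu>: "prob_space \<mu>" and mom: "\<And>m. integrable \<mu> (\<lambda>t. t ^ count_list xs m)"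
      "\<And>m. (\<integral>t. t ^ count_list xs m \<partial>\<mu>) = std_moment \<kappa> (count_list xs m)"
    using assms(1) order_trans[OF count_le_length assms(3)] unfolding has_std_moments_def by auto
  have eq: "prod_list (map x xs) = (\<Prod>m<d. x m ^ count_list xs m)" for x :: "nat \<Rightarrow> real"
    using assms(2) by (rule prod_list_map_eq_prod_power_count[OF finite_lessThan])
  show "integrable (PiM {..<d} (\<lambda>_. \<mu>)) (\<lambda>x. prod_list (map x xs))"
    unfolding eq using integrable_iid_prod[OF \<mu> finite_lessThan mom(1)] .
  have "(\<integral>x. prod_list (map x xs) \<partial>PiM {..<d} (\<lambda>_. \<mu>)) = (\<Prod>m<d. std_moment \<kappa> (count_list xs m))"
    unfolding eq using integral_iid_prod[OF \<mu> finite_lessThan mom(1)] by (simp add: mom(2))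
  also have "\<dots> = (\<Prod>m\<in>set xs. std_moment \<kappa> (count_list xs m))"
    using assms(2) by (intro prod.mono_neutral_right) (auto simp: std_moment_def)
  finally show "(\<integral>x. prod_list (map x xs) \<partial>PiM {..<d} (\<lambda>_. \<mu>)) = (\<Prod>m\<in>set xs. std_moment \<kappa> (count_list xs m))" .
qed

text \<open>Isserlis' pairing formula, corrected on the full diagonal by the excess kurtosis.\<close>

definition fourth_moment :: "real \<Rightarrow> nat \<Rightarrow> nat \<Rightarrow> nat \<Rightarrow> nat \<Rightarrow> real" where
  "fourth_moment \<kappa> i j k l = of_bool (i = j \<and> k = l) + of_bool (i = k \<and> j = l) + of_bool (i = l \<and> j = k)
     + \<kappa> * of_bool (i = j \<and> j = k \<and> k = l)"

lemma
  fixes d :: nat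
  assumes "has_std_moments \<mu> \<kappa>" "i < d" "j < d"
  shows integrable_iid_second_moment: "integrable (PiM {..<d} (\<lambda>_. \<mu>)) (\<lambda>x. x i * x j)"
    and integral_iid_second_moment: "(\<integral>x. x i * x j \<partial>PiM {..<d} (\<lambda>_. \<mu>)) = of_bool (i = j)"
  using integrable_iid_mixed_moment[OF assms(1), of "[i, j]"]
    integral_iid_mixed_moment[OF assms(1), of "[i, j]"] assms(2,3)
  by (auto simp: std_moment_def)

lemma
  fixes d :: nat
  assumes "has_std_moments \<mu> \<kappa>" "i < d" "j < d" "k < d" "l < d"
  shows integrable_iid_fourth_moment: "integrable (PiM {..<d} (\<lambda>_. \<mu>)) (\<lambda>x. x i * x j * x k * x l)"
    and integral_iid_fourth_moment:
      "(\<integral>x. x i * x j * x k * x l \<partial>PiM {..<d} (\<lambda>_. \<mu>)) = fourth_moment \<kappa> i j k l"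
proof -
  have eq: "(\<lambda>x. x i * x j * x k * x l) = (\<lambda>x :: nat \<Rightarrow> real. prod_list (map x [i, j, k, l]))"
    by (simp add: mult.assoc)
  show "integrable (PiM {..<d} (\<lambda>_. \<mu>)) (\<lambda>x. x i * x j * x k * x l)"
    unfolding eq by (rule integrable_iid_mixed_moment[OF assms(1)]) (use assms in auto)
  have "(\<Prod>m\<in>set [i, j, k, l]. std_moment \<kappa> (count_list [i, j, k, l] m)) = fourth_moment \<kappa> i j k l"
    by (cases "i = j"; cases "i = k"; cases "i = l"; cases "j = k"; cases "j = l"; cases "k = l")
       (auto simp: fourth_moment_def std_moment_def insert_commute)
  moreover have "(\<integral>x. prod_list (map x [i, j, k, l]) \<partial>PiM {..<d} (\<lambda>_. \<mu>))
      = (\<Prod>m\<in>set [i, j, k, l]. std_moment \<kappa> (count_list [i, j, k, l] m))"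
    by (rule integral_iid_mixed_moment[OF assms(1)]) (use assms in auto)
  ultimately show "(\<integral>x. x i * x j * x k * x l \<partial>PiM {..<d} (\<lambda>_. \<mu>)) = fourth_moment \<kappa> i j k l"
    unfolding eq by simp
qed

section \<open>Moments of quadratic forms in iid vectors\<close>

lemma fourth_moment_contract:
  fixes M :: "nat \<Rightarrow> nat \<Rightarrow> real"
  assumes "\<And>i j. i < d \<Longrightarrow> j < d \<Longrightarrow> M i j = M j i"
  shows "(\<Sum>i<d. \<Sum>j<d. \<Sum>k<d. \<Sum>l<d. fourth_moment \<kappa> i j k l * (M i j * M k l))
     = (\<Sum>i<d. M i i)\<^sup>2 + 2 * (\<Sum>i<d. \<Sum>j<d. (M i j)\<^sup>2) + \<kappa> * (\<Sum>i<d. (M i i)\<^sup>2)"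
proof -
  have sum_if_zero: "(\<Sum>k\<in>A. if P then f k else 0) = (if P then sum f A else 0)"
    for A P and f :: "nat \<Rightarrow> real"
    by simp
  have "fourth_moment \<kappa> i j k l * X = (if j = i then if l = k then X else 0 else 0)
     + (if k = i then if l = j then X else 0 else 0) + (if k = j then if l = i then X else 0 else 0)
     + (if j = i then if k = i then if l = i then \<kappa> * X else 0 else 0 else 0)" for i j k l X
    by (auto simp: fourth_moment_def algebra_simps)
  then have "(\<Sum>i<d. \<Sum>j<d. \<Sum>k<d. \<Sum>l<d. fourth_moment \<kappa> i j k l * (M i j * M k l))
     = (\<Sum>i<d. \<Sum>k<d. M i i * M k k) + (\<Sum>i<d. \<Sum>j<d. M i j * M i j) + (\<Sum>i<d. \<Sum>j<d. M i j * M j i)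
       + \<kappa> * (\<Sum>i<d. M i i * M i i)"
    by (simp add: sum.distrib sum_distrib_left sum_if_zero)
  also have "(\<Sum>i<d. \<Sum>j<d. M i j * M j i) = (\<Sum>i<d. \<Sum>j<d. M i j * M i j)"
    using assms by (intro sum.cong refl) simp
  finally show ?thesis
    by (simp add: power2_eq_square sum_product)
qed

lemma integral_sum_sum:
  fixes f :: "'i \<Rightarrow> 'j \<Rightarrow> 'a \<Rightarrow> real"
  assumes "\<And>i j. i \<in> I \<Longrightarrow> j \<in> J \<Longrightarrow> integrable M (f i j)"
  shows "(\<integral>x. (\<Sum>i\<in>I. \<Sum>j\<in>J. f i j x) \<partial>M) = (\<Sum>i\<in>I. \<Sum>j\<in>J. integral\<^sup>L M (f i j))"
  using assms by (auto simp: Bochner_Integration.integral_sum intro!: sum.cong)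

lemma integral_sum_sum_sum_sum:
  fixes f :: "'i \<Rightarrow> 'j \<Rightarrow> 'k \<Rightarrow> 'l \<Rightarrow> 'a \<Rightarrow> real"
  assumes "\<And>i j k l. i \<in> I \<Longrightarrow> j \<in> J \<Longrightarrow> k \<in> K \<Longrightarrow> l \<in> L \<Longrightarrow> integrable M (f i j k l)"
  shows "(\<integral>x. (\<Sum>i\<in>I. \<Sum>j\<in>J. \<Sum>k\<in>K. \<Sum>l\<in>L. f i j k l x) \<partial>M)
    = (\<Sum>i\<in>I. \<Sum>j\<in>J. \<Sum>k\<in>K. \<Sum>l\<in>L. integral\<^sup>L M (f i j k l))"
proof -
  have "(\<integral>x. (\<Sum>i\<in>I. \<Sum>j\<in>J. \<Sum>k\<in>K. \<Sum>l\<in>L. f i j k l x) \<partial>M)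
      = (\<Sum>i\<in>I. \<Sum>j\<in>J. \<integral>x. (\<Sum>k\<in>K. \<Sum>l\<in>L. f i j k l x) \<partial>M)"
    using assms by (intro integral_sum_sum Bochner_Integration.integrable_sum)
  also have "\<dots> = (\<Sum>i\<in>I. \<Sum>j\<in>J. \<Sum>k\<in>K. \<Sum>l\<in>L. integral\<^sup>L M (f i j k l))"
    using assms by (intro sum.cong refl integral_sum_sum)
  finally show ?thesis .
qed

lemma sum_of_bool_eq_diag:
  fixes N :: "nat \<Rightarrow> nat \<Rightarrow> 'a::comm_ring_1"
  shows "(\<Sum>i<d. \<Sum>j<d. of_bool (i = j) * N i j) = (\<Sum>i<d. N i i)"
proof (intro sum.cong refl)
  fix i assume "i \<in> {..<d}"
  then have "{..<d} \<inter> {j. i = j} = {i}" by auto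
  then show "(\<Sum>j<d. of_bool (i = j) * N i j) = N i i" by simp
qed

lemma
  fixes d :: nat and N :: "nat \<Rightarrow> nat \<Rightarrow> real"
  assumes \<mu>: "has_std_moments \<mu> \<kappa>"
  shows integrable_iid_qform: "integrable (PiM {..<d} (\<lambda>_. \<mu>)) (\<lambda>x. \<Sum>i<d. \<Sum>j<d. x i * x j * N i j)"
    and integral_iid_qform: "(\<integral>x. (\<Sum>i<d. \<Sum>j<d. x i * x j * N i j) \<partial>PiM {..<d} (\<lambda>_. \<mu>)) = (\<Sum>i<d. N i i)"
    and integral_iid_qform_sq: "(\<integral>x. (\<Sum>i<d. \<Sum>j<d. x i * x j * N i j)\<^sup>2 \<partial>PiM {..<d} (\<lambda>_. \<mu>))
      = (\<Sum>i<d. \<Sum>j<d. \<Sum>k<d. \<Sum>l<d. fourth_moment \<kappa> i j k l * (N i j * N k l))"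
proof -
  let ?D = "PiM {..<d} (\<lambda>_. \<mu>)"
  have sq: "(\<Sum>i<d. \<Sum>j<d. x i * x j * N i j)\<^sup>2
      = (\<Sum>i<d. \<Sum>j<d. \<Sum>k<d. \<Sum>l<d. x i * x j * x k * x l * (N i j * N k l))" for x :: "nat \<Rightarrow> real"
    unfolding power2_eq_square sum_distrib_right sum_distrib_left by (simp add: mult_ac)
  note moments = integrable_iid_second_moment[OF \<mu>] integral_iid_second_moment[OF \<mu>]
    integrable_iid_fourth_moment[OF \<mu>] integral_iid_fourth_moment[OF \<mu>]
  show "integrable ?D (\<lambda>x. \<Sum>i<d. \<Sum>j<d. x i * x j * N i j)"
    by (intro Bochner_Integration.integrable_sum integrable_mult_left moments(1)) auto
  have "(\<integral>x. (\<Sum>i<d. \<Sum>j<d. x i * x j * N i j) \<partial>?D) = (\<Sum>i<d. \<Sum>j<d. of_bool (i = j) * N i j)"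
    by (subst integral_sum_sum) (simp_all add: moments)
  also have "\<dots> = (\<Sum>i<d. N i i)"
    by (rule sum_of_bool_eq_diag)
  finally show "(\<integral>x. (\<Sum>i<d. \<Sum>j<d. x i * x j * N i j) \<partial>?D) = (\<Sum>i<d. N i i)" .
  show "(\<integral>x. (\<Sum>i<d. \<Sum>j<d. x i * x j * N i j)\<^sup>2 \<partial>?D)
      = (\<Sum>i<d. \<Sum>j<d. \<Sum>k<d. \<Sum>l<d. fourth_moment \<kappa> i j k l * (N i j * N k l))"
    unfolding sq by (subst integral_sum_sum_sum_sum) (simp_all add: moments)
qed

lemma integrable_iid_qform_mult:
  fixes d :: nat and N N' :: "nat \<Rightarrow> nat \<Rightarrow> real"
  assumes "has_std_moments \<mu> \<kappa>"
  shows "integrable (PiM {..<d} (\<lambda>_. \<mu>))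
     (\<lambda>x. (\<Sum>i<d. \<Sum>j<d. x i * x j * N i j) * (\<Sum>k<d. \<Sum>l<d. x k * x l * N' k l))"
proof -
  have eq: "(\<Sum>i<d. \<Sum>j<d. x i * x j * N i j) * (\<Sum>k<d. \<Sum>l<d. x k * x l * N' k l)
      = (\<Sum>i<d. \<Sum>j<d. \<Sum>k<d. \<Sum>l<d. x i * x j * x k * x l * (N i j * N' k l))" for x :: "nat \<Rightarrow> real"
    unfolding sum_distrib_right unfolding sum_distrib_left by (simp add: mult_ac)
  show ?thesis
    unfolding eq using integrable_iid_fourth_moment[OF assms]
    by (intro Bochner_Integration.integrable_sum integrable_mult_left) auto
qed

lemma integral_iid_qform_sq_le:
  fixes d :: nat and N :: "nat \<Rightarrow> nat \<Rightarrow> real"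
  assumes "has_std_moments \<mu> \<kappa>" "\<kappa> \<le> 0" "\<And>i j. i < d \<Longrightarrow> j < d \<Longrightarrow> N i j = N j i"
  shows "(\<integral>x. (\<Sum>i<d. \<Sum>j<d. x i * x j * N i j)\<^sup>2 \<partial>PiM {..<d} (\<lambda>_. \<mu>))
      \<le> (\<Sum>i<d. N i i)\<^sup>2 + 2 * (\<Sum>i<d. \<Sum>j<d. (N i j)\<^sup>2)"
proof -
  have "\<kappa> * (\<Sum>i<d. (N i i)\<^sup>2) \<le> 0"
    using assms(2) by (simp add: mult_nonpos_nonneg sum_nonneg)
  moreover have "(\<integral>x. (\<Sum>i<d. \<Sum>j<d. x i * x j * N i j)\<^sup>2 \<partial>PiM {..<d} (\<lambda>_. \<mu>))
      = (\<Sum>i<d. N i i)\<^sup>2 + 2 * (\<Sum>i<d. \<Sum>j<d. (N i j)\<^sup>2) + \<kappa> * (\<Sum>i<d. (N i i)\<^sup>2)"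
    using integral_iid_qform_sq[OF assms(1)] fourth_moment_contract[OF assms(3)] by simp
  ultimately show ?thesis by linarith
qed

lemma
  fixes f :: "'a \<Rightarrow> real" and g :: "'b \<Rightarrow> real"
  assumes "sigma_finite_measure M1" "sigma_finite_measure M2" "integrable M1 f" "integrable M2 g"
  shows integrable_pair_mult: "integrable (M1 \<Otimes>\<^sub>M M2) (\<lambda>z. f (fst z) * g (snd z))"
    and integral_pair_mult: "(\<integral>z. f (fst z) * g (snd z) \<partial>(M1 \<Otimes>\<^sub>M M2)) = integral\<^sup>L M1 f * integral\<^sup>L M2 g"
proof -
  interpret pair_sigma_finite M1 M2
    using assms(1,2) by (simp add: pair_sigma_finite_def)
  have [measurable]: "f \<in> borel_measurable M1" "g \<in> borel_measurable M2"
    using assms(3,4) by auto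
  show int: "integrable (M1 \<Otimes>\<^sub>M M2) (\<lambda>z. f (fst z) * g (snd z))"
  proof (rule Fubini_integrable)
    have "integrable M1 (\<lambda>x. norm (f x) * (\<integral>y. norm (g y) \<partial>M2))"
      using assms(3) by (intro integrable_mult_left) auto
    then show "integrable M1 (\<lambda>x. \<integral>y. norm (f (fst (x, y)) * g (snd (x, y))) \<partial>M2)"
      by (simp add: abs_mult)
  qed (use assms(4) in auto)
  show "(\<integral>z. f (fst z) * g (snd z) \<partial>(M1 \<Otimes>\<^sub>M M2)) = integral\<^sup>L M1 f * integral\<^sup>L M2 g"
    using integral_fst'[OF int] by simp
qed

lemma
  fixes d :: nat and c :: "nat \<Rightarrow> nat \<Rightarrow> 'b \<Rightarrow> real"
  assumes \<mu>: "has_std_moments \<mu> \<kappa>" and \<nu>: "prob_space \<nu>" and c: "\<And>i j. integrable \<nu> (c i j)"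
  shows integrable_iid_pair_qform:
      "integrable (PiM {..<d} (\<lambda>_. \<mu>) \<Otimes>\<^sub>M \<nu>) (\<lambda>z. \<Sum>i<d. \<Sum>j<d. fst z i * fst z j * c i j (snd z))"
    and integral_iid_pair_qform:
      "(\<integral>z. (\<Sum>i<d. \<Sum>j<d. fst z i * fst z j * c i j (snd z)) \<partial>(PiM {..<d} (\<lambda>_. \<mu>) \<Otimes>\<^sub>M \<nu>))
        = (\<integral>w. (\<Sum>i<d. c i i w) \<partial>\<nu>)"
proof -
  let ?P = "PiM {..<d} (\<lambda>_. \<mu>) \<Otimes>\<^sub>M \<nu>"
  have sf: "sigma_finite_measure (PiM {..<d} (\<lambda>_. \<mu>))" "sigma_finite_measure \<nu>"
    using prob_space_PiM_std_moments[OF \<mu>] \<nu> by (auto intro: prob_space_imp_sigma_finite)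
  have int: "integrable ?P (\<lambda>z. fst z i * fst z j * c i j (snd z))"
    and val: "(\<integral>z. fst z i * fst z j * c i j (snd z) \<partial>?P) = of_bool (i = j) * integral\<^sup>L \<nu> (c i j)"
    if "i < d" "j < d" for i j
    using integrable_pair_mult[OF sf integrable_iid_second_moment[OF \<mu> that] c]
      integral_pair_mult[OF sf integrable_iid_second_moment[OF \<mu> that] c]
      integral_iid_second_moment[OF \<mu> that] by simp_all
  show "integrable ?P (\<lambda>z. \<Sum>i<d. \<Sum>j<d. fst z i * fst z j * c i j (snd z))"
    using int by (intro Bochner_Integration.integrable_sum) auto
  have "(\<integral>z. (\<Sum>i<d. \<Sum>j<d. fst z i * fst z j * c i j (snd z)) \<partial>?P)
      = (\<Sum>i<d. \<Sum>j<d. of_bool (i = j) * integral\<^sup>L \<nu> (c i j))"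
    using int val by (subst integral_sum_sum) auto
  also have "\<dots> = (\<Sum>i<d. integral\<^sup>L \<nu> (c i i))"
    by (rule sum_of_bool_eq_diag)
  also have "\<dots> = (\<integral>w. (\<Sum>i<d. c i i w) \<partial>\<nu>)"
    using c by (simp add: Bochner_Integration.integral_sum)
  finally show "(\<integral>z. (\<Sum>i<d. \<Sum>j<d. fst z i * fst z j * c i j (snd z)) \<partial>?P) = (\<integral>w. (\<Sum>i<d. c i i w) \<partial>\<nu>)" .
qed

lemma
  fixes d :: nat and c :: "nat \<Rightarrow> nat \<Rightarrow> 'b \<Rightarrow> real"
  assumes \<mu>: "has_std_moments \<mu> \<kappa>" and \<nu>: "prob_space \<nu>"
    and cc: "\<And>i j k l. integrable \<nu> (\<lambda>w. c i j w * c k l w)"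
  shows integrable_iid_pair_qform_sq:
      "integrable (PiM {..<d} (\<lambda>_. \<mu>) \<Otimes>\<^sub>M \<nu>) (\<lambda>z. (\<Sum>i<d. \<Sum>j<d. fst z i * fst z j * c i j (snd z))\<^sup>2)"
    and integral_iid_pair_qform_sq:
      "(\<integral>z. (\<Sum>i<d. \<Sum>j<d. fst z i * fst z j * c i j (snd z))\<^sup>2 \<partial>(PiM {..<d} (\<lambda>_. \<mu>) \<Otimes>\<^sub>M \<nu>))
        = (\<integral>w. (\<Sum>i<d. \<Sum>j<d. \<Sum>k<d. \<Sum>l<d. fourth_moment \<kappa> i j k l * (c i j w * c k l w)) \<partial>\<nu>)"
proof -
  let ?P = "PiM {..<d} (\<lambda>_. \<mu>) \<Otimes>\<^sub>M \<nu>"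
  have sf: "sigma_finite_measure (PiM {..<d} (\<lambda>_. \<mu>))" "sigma_finite_measure \<nu>"
    using prob_space_PiM_std_moments[OF \<mu>] \<nu> by (auto intro: prob_space_imp_sigma_finite)
  have sq: "(\<Sum>i<d. \<Sum>j<d. fst z i * fst z j * c i j (snd z))\<^sup>2 = (\<Sum>i<d. \<Sum>j<d. \<Sum>k<d. \<Sum>l<d.
      fst z i * fst z j * fst z k * fst z l * (c i j (snd z) * c k l (snd z)))" for z
    unfolding power2_eq_square sum_distrib_right sum_distrib_left by (simp add: mult_ac)
  have int: "integrable ?P (\<lambda>z. fst z i * fst z j * fst z k * fst z l * (c i j (snd z) * c k l (snd z)))"
    and val: "(\<integral>z. fst z i * fst z j * fst z k * fst z l * (c i j (snd z) * c k l (snd z)) \<partial>?P)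
      = fourth_moment \<kappa> i j k l * (\<integral>w. c i j w * c k l w \<partial>\<nu>)"
    if "i < d" "j < d" "k < d" "l < d" for i j k l
    using integrable_pair_mult[OF sf integrable_iid_fourth_moment[OF \<mu> that] cc]
      integral_pair_mult[OF sf integrable_iid_fourth_moment[OF \<mu> that] cc]
      integral_iid_fourth_moment[OF \<mu> that] by simp_all
  show "integrable ?P (\<lambda>z. (\<Sum>i<d. \<Sum>j<d. fst z i * fst z j * c i j (snd z))\<^sup>2)"
    unfolding sq using int by (intro Bochner_Integration.integrable_sum) auto
  have "(\<integral>z. (\<Sum>i<d. \<Sum>j<d. fst z i * fst z j * c i j (snd z))\<^sup>2 \<partial>?P)
      = (\<Sum>i<d. \<Sum>j<d. \<Sum>k<d. \<Sum>l<d. fourth_moment \<kappa> i j k l * (\<integral>w. c i j w * c k l w \<partial>\<nu>))"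
    unfolding sq using int val by (subst integral_sum_sum_sum_sum) auto
  also have "\<dots> = (\<integral>w. (\<Sum>i<d. \<Sum>j<d. \<Sum>k<d. \<Sum>l<d. fourth_moment \<kappa> i j k l * (c i j w * c k l w)) \<partial>\<nu>)"
    using cc by (subst integral_sum_sum_sum_sum) auto
  finally show "(\<integral>z. (\<Sum>i<d. \<Sum>j<d. fst z i * fst z j * c i j (snd z))\<^sup>2 \<partial>?P)
      = (\<integral>w. (\<Sum>i<d. \<Sum>j<d. \<Sum>k<d. \<Sum>l<d. fourth_moment \<kappa> i j k l * (c i j w * c k l w)) \<partial>\<nu>)" .
qed

lemma integral_iid_pair_qform_sq_le:
  fixes d :: nat and c :: "nat \<Rightarrow> nat \<Rightarrow> 'b \<Rightarrow> real"
  assumes \<mu>: "has_std_moments \<mu> \<kappa>" "\<kappa> \<le> 0" and \<nu>: "prob_space \<nu>"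
    and cc: "\<And>i j k l. integrable \<nu> (\<lambda>w. c i j w * c k l w)" and sym: "\<And>i j w. c i j w = c j i w"
  shows "(\<integral>z. (\<Sum>i<d. \<Sum>j<d. fst z i * fst z j * c i j (snd z))\<^sup>2 \<partial>(PiM {..<d} (\<lambda>_. \<mu>) \<Otimes>\<^sub>M \<nu>))
    \<le> (\<integral>w. (\<Sum>i<d. c i i w)\<^sup>2 + 2 * (\<Sum>i<d. \<Sum>j<d. (c i j w)\<^sup>2) \<partial>\<nu>)"
proof -
  have "(\<integral>w. (\<Sum>i<d. \<Sum>j<d. \<Sum>k<d. \<Sum>l<d. fourth_moment \<kappa> i j k l * (c i j w * c k l w)) \<partial>\<nu>)
      \<le> (\<integral>w. (\<Sum>i<d. c i i w)\<^sup>2 + 2 * (\<Sum>i<d. \<Sum>j<d. (c i j w)\<^sup>2) \<partial>\<nu>)"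
  proof (rule integral_mono)
    show "integrable \<nu> (\<lambda>w. \<Sum>i<d. \<Sum>j<d. \<Sum>k<d. \<Sum>l<d. fourth_moment \<kappa> i j k l * (c i j w * c k l w))"
      using cc by (intro Bochner_Integration.integrable_sum integrable_mult_right) auto
    show "integrable \<nu> (\<lambda>w. (\<Sum>i<d. c i i w)\<^sup>2 + 2 * (\<Sum>i<d. \<Sum>j<d. (c i j w)\<^sup>2))"
      unfolding power2_eq_square sum_product
      using cc by (intro Bochner_Integration.integrable_add Bochner_Integration.integrable_sum integrable_mult_right) auto
    fix w
    have "\<kappa> * (\<Sum>i<d. (c i i w)\<^sup>2) \<le> 0"
      using \<mu>(2) by (simp add: mult_nonpos_nonneg sum_nonneg)
    then show "(\<Sum>i<d. \<Sum>j<d. \<Sum>k<d. \<Sum>l<d. fourth_moment \<kappa> i j k l * (c i j w * c k l w))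
        \<le> (\<Sum>i<d. c i i w)\<^sup>2 + 2 * (\<Sum>i<d. \<Sum>j<d. (c i j w)\<^sup>2)"
      using fourth_moment_contract[of d "\<lambda>i j. c i j w" \<kappa>] sym by simp
  qed
  then show ?thesis
    by (simp only: integral_iid_pair_qform_sq[OF \<mu>(1) \<nu> cc])
qed

section \<open>Quadratic forms at Kronecker vectors\<close>

definition partial_qform :: "nat \<Rightarrow> bmat \<Rightarrow> (nat \<Rightarrow> real) \<Rightarrow> nat \<Rightarrow> nat \<Rightarrow> real" where
  "partial_qform d S v i j = (\<Sum>a<d. \<Sum>b<d. v a * v b * S (i,a) (j,b))"

lemma sum_lessThan_times_lessThan: "(\<Sum>p\<in>{..<d}\<times>{..<d}. f p) = (\<Sum>i<(d::nat). \<Sum>a<d. f (i,a))"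
  by (simp add: sum.cartesian_product)

lemma qform_kron:
  "qform d A (kron u v) = (\<Sum>i<d. \<Sum>a<d. \<Sum>j<d. \<Sum>b<d. u i * v a * A (i,a) (j,b) * u j * v b)"
  unfolding qform_def kron_def sum_lessThan_times_lessThan by (simp add: sum_distrib_left mult_ac)

lemma qform_kron_ptrans1: "qform d (ptrans1 A) (kron u v) = qform d A (kron u v)"
proof -
  have "qform d (ptrans1 A) (kron u v) = (\<Sum>i<d. \<Sum>a<d. \<Sum>j<d. \<Sum>b<d. u i * v a * A (j,a) (i,b) * u j * v b)"
    unfolding qform_kron ptrans1_def by simp
  also have "\<dots> = (\<Sum>i<d. \<Sum>j<d. \<Sum>a<d. \<Sum>b<d. u i * v a * A (j,a) (i,b) * u j * v b)"
    by (intro sum.cong refl sum.swap)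
  also have "\<dots> = (\<Sum>j<d. \<Sum>i<d. \<Sum>a<d. \<Sum>b<d. u i * v a * A (j,a) (i,b) * u j * v b)"
    by (rule sum.swap)
  also have "\<dots> = (\<Sum>j<d. \<Sum>a<d. \<Sum>i<d. \<Sum>b<d. u i * v a * A (j,a) (i,b) * u j * v b)"
    by (intro sum.cong refl sum.swap)
  also have "\<dots> = qform d A (kron u v)"
    unfolding qform_kron by (intro sum.cong refl) (simp add: mult_ac)
  finally show ?thesis .
qed

lemma qform_kron_ptrans2: "qform d (ptrans2 A) (kron u v) = qform d A (kron u v)"
proof -
  have "qform d (ptrans2 A) (kron u v) = (\<Sum>i<d. \<Sum>a<d. \<Sum>j<d. \<Sum>b<d. u i * v a * A (i,b) (j,a) * u j * v b)"
    unfolding qform_kron ptrans2_def by simp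
  also have "\<dots> = (\<Sum>i<d. \<Sum>j<d. \<Sum>a<d. \<Sum>b<d. u i * v a * A (i,b) (j,a) * u j * v b)"
    by (intro sum.cong refl sum.swap)
  also have "\<dots> = (\<Sum>i<d. \<Sum>j<d. \<Sum>b<d. \<Sum>a<d. u i * v a * A (i,b) (j,a) * u j * v b)"
    by (intro sum.cong refl sum.swap)
  also have "\<dots> = (\<Sum>i<d. \<Sum>b<d. \<Sum>j<d. \<Sum>a<d. u i * v a * A (i,b) (j,a) * u j * v b)"
    by (intro sum.cong refl sum.swap)
  also have "\<dots> = qform d A (kron u v)"
    unfolding qform_kron by (intro sum.cong refl) (simp add: mult_ac)
  finally show ?thesis .
qed

lemma qform_btrans: "qform d (btrans A) x = qform d A x"
  unfolding qform_def btrans_def by (subst sum.swap) (simp add: mult_ac)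

lemma qform_kron_sym_bar: "qform d (sym_bar A) (kron u v) = qform d A (kron u v)"
proof -
  have "qform d (sym_bar A) x = (qform d A x + qform d (ptrans1 A) x + qform d (ptrans2 A) x + qform d (btrans A) x) / 4"
    for x
    unfolding qform_def sym_bar_def
    by (simp add: sum.distrib sum_divide_distrib[symmetric] add_divide_distrib distrib_left distrib_right)
  from this[of "kron u v"] show ?thesis
    by (simp add: qform_kron_ptrans1 qform_kron_ptrans2 qform_btrans)
qed

lemma qform_kron_eq_partial_qform:
  "qform d A (kron u v) = (\<Sum>i<d. \<Sum>j<d. u i * u j * partial_qform d (sym_bar A) v i j)"
proof -
  let ?S = "sym_bar A"
  have "qform d ?S (kron u v) = (\<Sum>i<d. \<Sum>j<d. \<Sum>a<d. \<Sum>b<d. u i * v a * ?S (i,a) (j,b) * u j * v b)"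
    unfolding qform_kron by (rule sum.cong[OF refl], rule sum.swap)
  then show ?thesis
    unfolding partial_qform_def qform_kron_sym_bar by (simp add: sum_distrib_left mult_ac)
qed

lemma sym_bar_swap_blocks: "sym_bar A (i,a) (j,b) = sym_bar A (j,a) (i,b)"
  unfolding sym_bar_def ptrans1_def ptrans2_def btrans_def by simp

lemma sym_bar_swap_inner: "sym_bar A (i,a) (j,b) = sym_bar A (i,b) (j,a)"
  unfolding sym_bar_def ptrans1_def ptrans2_def btrans_def by simp

lemma partial_qform_sym_bar_commute: "partial_qform d (sym_bar A) v i j = partial_qform d (sym_bar A) v j i"
  unfolding partial_qform_def by (subst sym_bar_swap_blocks) (rule refl)

lemma sum_partial_qform_diag:
  "(\<Sum>i<d. partial_qform d S v i i) = (\<Sum>a<d. \<Sum>b<d. v a * v b * ptr1 d S a b)"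
proof -
  have "(\<Sum>i<d. partial_qform d S v i i) = (\<Sum>a<d. \<Sum>b<d. \<Sum>i<d. v a * v b * S (i,a) (i,b))"
    unfolding partial_qform_def by (subst sum.swap, subst (2) sum.swap) (rule refl)
  then show ?thesis
    unfolding ptr1_def by (simp add: sum_distrib_left)
qed

lemma btrace_sym_bar: "(\<Sum>a<d. ptr1 d (sym_bar A) a a) = btrace d A"
  unfolding btrace_def ptr1_def sym_bar_def ptrans1_def ptrans2_def btrans_def
  by (subst sum.swap) (simp add: sum_lessThan_times_lessThan)


section \<open>Mean and variance of the Kronecker quadratic form\<close>

lemma integrable_partial_qform_mult:
  fixes d :: nat
  assumes "has_std_moments \<mu> \<kappa>"
  shows "integrable (PiM {..<d} (\<lambda>_. \<mu>)) (\<lambda>v. partial_qform d S v i j * partial_qform d S v k l)"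
  unfolding partial_qform_def by (rule integrable_iid_qform_mult[OF assms])

lemma
  fixes d :: nat and A :: bmat
  assumes \<mu>1: "has_std_moments \<mu>1 \<kappa>1" and \<mu>2: "has_std_moments \<mu>2 \<kappa>2"
  shows integrable_kron_qform: "integrable (PiM {..<d} (\<lambda>_. \<mu>1) \<Otimes>\<^sub>M PiM {..<d} (\<lambda>_. \<mu>2))
      (\<lambda>z. qform d A (kron (fst z) (snd z)))"
    and integral_kron_qform: "(\<integral>z. qform d A (kron (fst z) (snd z)) \<partial>(PiM {..<d} (\<lambda>_. \<mu>1) \<Otimes>\<^sub>M PiM {..<d} (\<lambda>_. \<mu>2)))
      = btrace d A"
    and integrable_kron_qform_sq: "integrable (PiM {..<d} (\<lambda>_. \<mu>1) \<Otimes>\<^sub>M PiM {..<d} (\<lambda>_. \<mu>2))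
      (\<lambda>z. (qform d A (kron (fst z) (snd z)))\<^sup>2)"
proof -
  let ?D2 = "PiM {..<d} (\<lambda>_. \<mu>2)"
  let ?c = "partial_qform d (sym_bar A)"
  have D2: "prob_space ?D2"
    by (rule prob_space_PiM_std_moments[OF \<mu>2])
  have c: "integrable ?D2 (\<lambda>v. ?c v i j)" for i j
    unfolding partial_qform_def by (rule integrable_iid_qform[OF \<mu>2])
  show "integrable (PiM {..<d} (\<lambda>_. \<mu>1) \<Otimes>\<^sub>M ?D2) (\<lambda>z. qform d A (kron (fst z) (snd z)))"
    unfolding qform_kron_eq_partial_qform by (rule integrable_iid_pair_qform[OF \<mu>1 D2 c])
  show "integrable (PiM {..<d} (\<lambda>_. \<mu>1) \<Otimes>\<^sub>M ?D2) (\<lambda>z. (qform d A (kron (fst z) (snd z)))\<^sup>2)"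
    unfolding qform_kron_eq_partial_qform by (rule integrable_iid_pair_qform_sq[OF \<mu>1 D2 integrable_partial_qform_mult[OF \<mu>2]])
  have "(\<integral>z. qform d A (kron (fst z) (snd z)) \<partial>(PiM {..<d} (\<lambda>_. \<mu>1) \<Otimes>\<^sub>M ?D2))
      = (\<integral>v. (\<Sum>a<d. \<Sum>b<d. v a * v b * ptr1 d (sym_bar A) a b) \<partial>?D2)"
    unfolding qform_kron_eq_partial_qform integral_iid_pair_qform[OF \<mu>1 D2 c] sum_partial_qform_diag ..
  also have "\<dots> = btrace d A"
    unfolding integral_iid_qform[OF \<mu>2] by (rule btrace_sym_bar)
  finally show "(\<integral>z. qform d A (kron (fst z) (snd z)) \<partial>(PiM {..<d} (\<lambda>_. \<mu>1) \<Otimes>\<^sub>M ?D2)) = btrace d A" .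
qed

lemma integral_partial_qform_sq_le:
  fixes d :: nat and A :: bmat
  assumes \<mu>: "has_std_moments \<mu> \<kappa>" "\<kappa> \<le> 0"
  shows "(\<integral>v. (\<Sum>i<d. partial_qform d (sym_bar A) v i i)\<^sup>2
        + 2 * (\<Sum>i<d. \<Sum>j<d. (partial_qform d (sym_bar A) v i j)\<^sup>2) \<partial>PiM {..<d} (\<lambda>_. \<mu>))
    \<le> (btrace d A)\<^sup>2 + 2 * frob_sq d (ptr1 d (sym_bar A)) + 2 * frob_sq d (ptr2 d (sym_bar A))
      + 4 * bfrob_sq d (sym_bar A)"
proof -
  let ?D = "PiM {..<d} (\<lambda>_. \<mu>)"
  define S where "S = sym_bar A"
  let ?c = "partial_qform d S"
  have ptr1_sym: "ptr1 d S a b = ptr1 d S b a" for a b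
    unfolding ptr1_def S_def by (subst sym_bar_swap_inner) (rule refl)
  have trace_sq: "(\<integral>v. (\<Sum>i<d. ?c v i i)\<^sup>2 \<partial>?D) \<le> (btrace d A)\<^sup>2 + 2 * frob_sq d (ptr1 d S)"
    unfolding sum_partial_qform_diag frob_sq_def btrace_sym_bar[of d A, folded S_def, symmetric]
    by (rule integral_iid_qform_sq_le[OF \<mu> ptr1_sym])
  have block_sq: "(\<integral>v. (?c v i j)\<^sup>2 \<partial>?D) \<le> (ptr2 d S i j)\<^sup>2 + 2 * (\<Sum>a<d. \<Sum>b<d. (S (i,a) (j,b))\<^sup>2)" for i j
    unfolding partial_qform_def ptr2_def S_def
    by (rule integral_iid_qform_sq_le[OF \<mu>]) (rule sym_bar_swap_inner)
  have "(\<integral>v. (\<Sum>i<d. ?c v i i)\<^sup>2 + 2 * (\<Sum>i<d. \<Sum>j<d. (?c v i j)\<^sup>2) \<partial>?D)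
      = (\<integral>v. (\<Sum>i<d. ?c v i i)\<^sup>2 \<partial>?D) + (\<integral>v. 2 * (\<Sum>i<d. \<Sum>j<d. (?c v i j)\<^sup>2) \<partial>?D)"
  proof (rule Bochner_Integration.integral_add)
    show "integrable ?D (\<lambda>v. (\<Sum>i<d. ?c v i i)\<^sup>2)"
      unfolding power2_eq_square sum_product
      by (intro Bochner_Integration.integrable_sum integrable_partial_qform_mult[OF \<mu>(1)])
    show "integrable ?D (\<lambda>v. 2 * (\<Sum>i<d. \<Sum>j<d. (?c v i j)\<^sup>2))"
      unfolding power2_eq_square
      by (intro integrable_mult_right Bochner_Integration.integrable_sum integrable_partial_qform_mult[OF \<mu>(1)])
  qed
  also have "\<dots> = (\<integral>v. (\<Sum>i<d. ?c v i i)\<^sup>2 \<partial>?D) + 2 * (\<Sum>i<d. \<Sum>j<d. \<integral>v. (?c v i j)\<^sup>2 \<partial>?D)"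
    unfolding power2_eq_square
    using integrable_partial_qform_mult[OF \<mu>(1)] by (simp add: integral_sum_sum)
  also have "\<dots> \<le> ((btrace d A)\<^sup>2 + 2 * frob_sq d (ptr1 d S))
      + 2 * (\<Sum>i<d. \<Sum>j<d. (ptr2 d S i j)\<^sup>2 + 2 * (\<Sum>a<d. \<Sum>b<d. (S (i,a) (j,b))\<^sup>2))"
    using trace_sq block_sq by (intro add_mono mult_left_mono sum_mono) auto
  also have "\<dots> = (btrace d A)\<^sup>2 + 2 * frob_sq d (ptr1 d S) + 2 * frob_sq d (ptr2 d S) + 4 * bfrob_sq d S"
  proof -
    have "bfrob_sq d S = (\<Sum>i<d. \<Sum>j<d. \<Sum>a<d. \<Sum>b<d. (S (i,a) (j,b))\<^sup>2)"
      unfolding bfrob_sq_def sum_lessThan_times_lessThan by (rule sum.cong[OF refl], rule sum.swap)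
    then show ?thesis
      unfolding frob_sq_def by (simp add: sum.distrib sum_distrib_left)
  qed
  finally show ?thesis unfolding S_def .
qed

lemma integral_kron_qform_sq_le:
  fixes d :: nat and A :: bmat
  assumes \<mu>1: "has_std_moments \<mu>1 \<kappa>1" "\<kappa>1 \<le> 0" and \<mu>2: "has_std_moments \<mu>2 \<kappa>2" "\<kappa>2 \<le> 0"
  shows "(\<integral>z. (qform d A (kron (fst z) (snd z)))\<^sup>2 \<partial>(PiM {..<d} (\<lambda>_. \<mu>1) \<Otimes>\<^sub>M PiM {..<d} (\<lambda>_. \<mu>2)))
    \<le> (btrace d A)\<^sup>2 + 2 * frob_sq d (ptr1 d (sym_bar A)) + 2 * frob_sq d (ptr2 d (sym_bar A))
      + 4 * bfrob_sq d (sym_bar A)"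
  unfolding qform_kron_eq_partial_qform
  using integral_iid_pair_qform_sq_le[OF \<mu>1 prob_space_PiM_std_moments[OF \<mu>2(1)]
      integrable_partial_qform_mult[OF \<mu>2(1)] partial_qform_sym_bar_commute]
  by (rule order_trans) (rule integral_partial_qform_sq_le[OF \<mu>2])

lemma variance_kron_qform_le:
  fixes d :: nat and A :: bmat
  assumes \<mu>1: "has_std_moments \<mu>1 \<kappa>1" "\<kappa>1 \<le> 0" and \<mu>2: "has_std_moments \<mu>2 \<kappa>2" "\<kappa>2 \<le> 0"
  shows "prob_space.variance (PiM {..<d} (\<lambda>_. \<mu>1) \<Otimes>\<^sub>M PiM {..<d} (\<lambda>_. \<mu>2)) (\<lambda>z. qform d A (kron (fst z) (snd z)))
    \<le> 2 * frob_sq d (ptr1 d (sym_bar A)) + 2 * frob_sq d (ptr2 d (sym_bar A)) + 4 * bfrob_sq d (sym_bar A)"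
proof -
  interpret prob_space "PiM {..<d} (\<lambda>_. \<mu>1) \<Otimes>\<^sub>M PiM {..<d} (\<lambda>_. \<mu>2)"
    using \<mu>1(1) \<mu>2(1) by (intro prob_space_pair prob_space_PiM_std_moments)
  have "variance (\<lambda>z. qform d A (kron (fst z) (snd z)))
      = expectation (\<lambda>z. (qform d A (kron (fst z) (snd z)))\<^sup>2) - (expectation (\<lambda>z. qform d A (kron (fst z) (snd z))))\<^sup>2"
    by (rule variance_eq[OF integrable_kron_qform[OF \<mu>1(1) \<mu>2(1)] integrable_kron_qform_sq[OF \<mu>1(1) \<mu>2(1)]])
  then show ?thesis
    using integral_kron_qform_sq_le[OF \<mu>1 \<mu>2, of d A] by (simp add: integral_kron_qform[OF \<mu>1(1) \<mu>2(1)])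
qed

section \<open>Positive semidefinite matrices\<close>

lemma quadratic_nonneg_imp_discriminant_le:
  fixes a b c :: real
  assumes nonneg: "\<And>s. 0 \<le> a * s\<^sup>2 + 2 * b * s + c" and "0 \<le> a"
  shows "b\<^sup>2 \<le> a * c"
proof (cases "a = 0")
  case True
  have "0 \<le> a * (-(c + 1) / (2 * b))\<^sup>2 + 2 * b * (-(c + 1) / (2 * b)) + c" if "b \<noteq> 0"
    by (rule nonneg)
  then show ?thesis
    using True by (cases "b = 0") (auto simp: field_simps)
next
  case False
  then have "0 < a" using \<open>0 \<le> a\<close> by simp
  have "0 \<le> a * (-b / a)\<^sup>2 + 2 * b * (-b / a) + c" by (rule nonneg)
  also have "\<dots> = c - b\<^sup>2 / a" using \<open>0 < a\<close> by (simp add: field_simps power2_eq_square)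
  finally show ?thesis using \<open>0 < a\<close> by (simp add: field_simps)
qed

lemma qform_supported:
  assumes "S \<subseteq> {..<d}\<times>{..<d}" "\<And>r. r \<notin> S \<Longrightarrow> x r = 0"
  shows "qform d A x = (\<Sum>p\<in>S. \<Sum>q\<in>S. x p * A p q * x q)"
proof -
  have "qform d A x = (\<Sum>p\<in>S. \<Sum>q\<in>{..<d}\<times>{..<d}. x p * A p q * x q)"
    unfolding qform_def using assms by (intro sum.mono_neutral_right) auto
  also have "\<dots> = (\<Sum>p\<in>S. \<Sum>q\<in>S. x p * A p q * x q)"
    using assms by (intro sum.cong refl sum.mono_neutral_right) auto
  finally show ?thesis .
qed

lemma qform_unit:
  assumes "p \<in> {..<d}\<times>{..<d}"
  shows "qform d A (\<lambda>r. of_bool (r = p)) = A p p"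
  using assms by (subst qform_supported[of "{p}"]) auto

lemma qform_two_units:
  assumes "p \<in> {..<d}\<times>{..<d}" "q \<in> {..<d}\<times>{..<d}" "p \<noteq> q"
  shows "qform d A (\<lambda>r. s * of_bool (r = p) + of_bool (r = q)) = A p p * s\<^sup>2 + (A p q + A q p) * s + A q q"
  using assms by (subst qform_supported[of "{p, q}"]) (auto simp: algebra_simps power2_eq_square)

lemma bpsd_sym: "bpsd d A \<Longrightarrow> p \<in> {..<d}\<times>{..<d} \<Longrightarrow> q \<in> {..<d}\<times>{..<d} \<Longrightarrow> A p q = A q p"
  unfolding bpsd_def by blast

lemma bpsd_diag_nonneg: "bpsd d A \<Longrightarrow> p \<in> {..<d}\<times>{..<d} \<Longrightarrow> 0 \<le> A p p"
  unfolding bpsd_def by (metis qform_unit)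

lemma bpsd_entry_sq_le:
  assumes psd: "bpsd d A" and p: "p \<in> {..<d}\<times>{..<d}" and q: "q \<in> {..<d}\<times>{..<d}"
  shows "(A p q)\<^sup>2 \<le> A p p * A q q"
proof (cases "p = q")
  case False
  have "A q p = A p q" using bpsd_sym[OF psd q p] .
  have "0 \<le> A p p * s\<^sup>2 + 2 * A p q * s + A q q" for s
  proof -
    have "0 \<le> qform d A (\<lambda>r. s * of_bool (r = p) + of_bool (r = q))"
      using psd unfolding bpsd_def by blast
    then show ?thesis
      unfolding qform_two_units[OF p q False] \<open>A q p = A p q\<close> by (simp add: algebra_simps)
  qed
  then show ?thesis
    by (rule quadratic_nonneg_imp_discriminant_le) (rule bpsd_diag_nonneg[OF psd p])
qed (simp add: power2_eq_square)

lemma square_sum_le_of_square_le: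
  fixes c \<alpha> \<beta> :: "'a \<Rightarrow> real"
  assumes "\<And>i. i \<in> I \<Longrightarrow> (c i)\<^sup>2 \<le> \<alpha> i * \<beta> i" "\<And>i. i \<in> I \<Longrightarrow> 0 \<le> \<alpha> i" "\<And>i. i \<in> I \<Longrightarrow> 0 \<le> \<beta> i"
  shows "(\<Sum>i\<in>I. c i)\<^sup>2 \<le> (\<Sum>i\<in>I. \<alpha> i) * (\<Sum>i\<in>I. \<beta> i)"
proof -
  have ci: "\<bar>c i\<bar> \<le> sqrt (\<alpha> i) * sqrt (\<beta> i)" if "i \<in> I" for i
    using real_sqrt_le_mono[OF assms(1)[OF that]] by (simp add: real_sqrt_mult)
  have "\<bar>\<Sum>i\<in>I. c i\<bar> \<le> (\<Sum>i\<in>I. sqrt (\<alpha> i) * sqrt (\<beta> i))"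
    by (rule order_trans[OF sum_abs sum_mono]) (rule ci)
  then have "(\<Sum>i\<in>I. c i)\<^sup>2 \<le> (\<Sum>i\<in>I. sqrt (\<alpha> i) * sqrt (\<beta> i))\<^sup>2"
    using power_mono[of "\<bar>\<Sum>i\<in>I. c i\<bar>" _ 2] by simp
  also have "\<dots> \<le> (\<Sum>i\<in>I. (sqrt (\<alpha> i))\<^sup>2) * (\<Sum>i\<in>I. (sqrt (\<beta> i))\<^sup>2)"
    by (rule Cauchy_Schwarz_ineq_sum)
  also have "\<dots> = (\<Sum>i\<in>I. \<alpha> i) * (\<Sum>i\<in>I. \<beta> i)"
    using assms(2,3) by simp
  finally show ?thesis .
qed

lemma square_mean4_le:
  fixes a b c e :: real
  shows "((a + b + c + e) / 4)\<^sup>2 \<le> (a\<^sup>2 + b\<^sup>2 + c\<^sup>2 + e\<^sup>2) / 4"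
proof -
  have "(a\<^sup>2 + b\<^sup>2 + c\<^sup>2 + e\<^sup>2) / 4 - ((a + b + c + e) / 4)\<^sup>2
      = ((a - b)\<^sup>2 + (a - c)\<^sup>2 + (a - e)\<^sup>2 + (b - c)\<^sup>2 + (b - e)\<^sup>2 + (c - e)\<^sup>2) / 16"
    by (simp add: power2_eq_square field_simps)
  moreover have "0 \<le> ((a - b)\<^sup>2 + (a - c)\<^sup>2 + (a - e)\<^sup>2 + (b - c)\<^sup>2 + (b - e)\<^sup>2 + (c - e)\<^sup>2) / 16"
    by simp
  ultimately show ?thesis by linarith
qed

lemma btrace_eq: "btrace d A = (\<Sum>i<d. \<Sum>a<d. A (i,a) (i,a))"
  unfolding btrace_def sum_lessThan_times_lessThan ..

lemma bpsd_frob_ptr1_sym_bar_le: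
  assumes psd: "bpsd d A"
  shows "frob_sq d (ptr1 d (sym_bar A)) \<le> (btrace d A)\<^sup>2"
proof -
  have sym: "A (i,a) (j,b) = A (j,b) (i,a)" if "i < d" "a < d" "j < d" "b < d" for i a j b
    using bpsd_sym[OF psd] that by simp
  have "(ptr1 d (sym_bar A) a b)\<^sup>2 \<le> (\<Sum>i<d. A (i,a) (i,a)) * (\<Sum>j<d. A (j,b) (j,b))"
    if "a < d" "b < d" for a b
  proof -
    have "ptr1 d (sym_bar A) a b = (\<Sum>i<d. A (i,a) (i,b))"
      unfolding ptr1_def sym_bar_def ptrans1_def ptrans2_def btrans_def
      using sym that by (intro sum.cong refl) auto
    then show ?thesis
      using that bpsd_entry_sq_le[OF psd] bpsd_diag_nonneg[OF psd]
      by (simp only:) (intro square_sum_le_of_square_le; simp)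
  qed
  then have "frob_sq d (ptr1 d (sym_bar A)) \<le> (\<Sum>a<d. \<Sum>b<d. (\<Sum>i<d. A (i,a) (i,a)) * (\<Sum>j<d. A (j,b) (j,b)))"
    unfolding frob_sq_def by (intro sum_mono) auto
  also have "\<dots> = (\<Sum>a<d. \<Sum>i<d. A (i,a) (i,a)) * (\<Sum>b<d. \<Sum>j<d. A (j,b) (j,b))"
    by (rule sum_product[symmetric])
  also have "\<dots> = (btrace d A)\<^sup>2"
    unfolding btrace_eq power2_eq_square sum.swap[of "\<lambda>i a. A (i,a) (i,a)"] ..
  finally show ?thesis .
qed

lemma bpsd_frob_ptr2_sym_bar_le:
  assumes psd: "bpsd d A"
  shows "frob_sq d (ptr2 d (sym_bar A)) \<le> (btrace d A)\<^sup>2"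
proof -
  have sym: "A (i,a) (j,b) = A (j,b) (i,a)" if "i < d" "a < d" "j < d" "b < d" for i a j b
    using bpsd_sym[OF psd] that by simp
  have "(ptr2 d (sym_bar A) i j)\<^sup>2 \<le> (\<Sum>a<d. A (i,a) (i,a)) * (\<Sum>a<d. A (j,a) (j,a))"
    if "i < d" "j < d" for i j
  proof -
    have "ptr2 d (sym_bar A) i j = (\<Sum>a<d. A (i,a) (j,a))"
      unfolding ptr2_def sym_bar_def ptrans1_def ptrans2_def btrans_def
      using sym that by (intro sum.cong refl) auto
    then show ?thesis
      using that bpsd_entry_sq_le[OF psd] bpsd_diag_nonneg[OF psd]
      by (simp only:) (intro square_sum_le_of_square_le; simp)
  qed
  then have "frob_sq d (ptr2 d (sym_bar A)) \<le> (\<Sum>i<d. \<Sum>j<d. (\<Sum>a<d. A (i,a) (i,a)) * (\<Sum>a<d. A (j,a) (j,a)))"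
    unfolding frob_sq_def by (intro sum_mono) auto
  also have "\<dots> = (btrace d A)\<^sup>2"
    unfolding btrace_eq power2_eq_square by (rule sum_product[symmetric])
  finally show ?thesis .
qed

lemma bpsd_bfrob_sym_bar_le:
  assumes psd: "bpsd d A"
  shows "bfrob_sq d (sym_bar A) \<le> (btrace d A)\<^sup>2"
proof -
  define D where "D i a = A (i,a) (i,a)" for i a
  have sq: "(A (i,a) (j,b))\<^sup>2 \<le> D i a * D j b" if "i < d" "a < d" "j < d" "b < d" for i a j b
    using bpsd_entry_sq_le[OF psd, of "(i,a)" "(j,b)"] that unfolding D_def by auto
  have entry: "(sym_bar A (i,a) (j,b))\<^sup>2 \<le> (D i a * D j b + D j a * D i b) / 2"
    if "i < d" "a < d" "j < d" "b < d" for i a j b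
  proof -
    have "(sym_bar A (i,a) (j,b))\<^sup>2
        \<le> ((A (i,a) (j,b))\<^sup>2 + (A (j,a) (i,b))\<^sup>2 + (A (i,b) (j,a))\<^sup>2 + (A (j,b) (i,a))\<^sup>2) / 4"
      unfolding sym_bar_def ptrans1_def ptrans2_def btrans_def by (simp only: split square_mean4_le)
    also have "\<dots> \<le> (D i a * D j b + D j a * D i b + D i b * D j a + D j b * D i a) / 4"
      using that by (intro divide_right_mono add_mono sq) auto
    finally show ?thesis by (simp add: mult.commute)
  qed
  have same: "(\<Sum>i<d. \<Sum>a<d. \<Sum>j<d. \<Sum>b<d. D i a * D j b) = (btrace d A)\<^sup>2"
    unfolding btrace_eq D_def power2_eq_square sum_distrib_right unfolding sum_distrib_left ..
  have crossed: "(\<Sum>i<d. \<Sum>a<d. \<Sum>j<d. \<Sum>b<d. D j a * D i b) = (btrace d A)\<^sup>2"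
  proof -
    have "(\<Sum>i<d. \<Sum>a<d. \<Sum>j<d. \<Sum>b<d. D j a * D i b) = (\<Sum>i<d. \<Sum>j<d. \<Sum>a<d. \<Sum>b<d. D j a * D i b)"
      by (intro sum.cong refl sum.swap)
    also have "\<dots> = (\<Sum>j<d. \<Sum>a<d. \<Sum>i<d. \<Sum>b<d. D j a * D i b)"
      by (subst sum.swap) (intro sum.cong refl sum.swap)
    finally show ?thesis using same by simp
  qed
  have "bfrob_sq d (sym_bar A) \<le> (\<Sum>i<d. \<Sum>a<d. \<Sum>j<d. \<Sum>b<d. (D i a * D j b + D j a * D i b) / 2)"
    unfolding bfrob_sq_def sum_lessThan_times_lessThan by (intro sum_mono entry) auto
  also have "\<dots> = (btrace d A)\<^sup>2"
    using same crossed by (simp add: sum.distrib sum_divide_distrib[symmetric])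
  finally show ?thesis .
qed

lemma bpsd_btrace_nonneg: "bpsd d A \<Longrightarrow> 0 \<le> btrace d A"
  unfolding btrace_def by (intro sum_nonneg bpsd_diag_nonneg)

lemma bpsd_btrace_zero_imp_qform_zero:
  assumes psd: "bpsd d A" and "btrace d A = 0"
  shows "qform d A x = 0"
proof -
  have "A p p = 0" if "p \<in> {..<d}\<times>{..<d}" for p
    using assms that bpsd_diag_nonneg[OF psd] unfolding btrace_def
    by (subst (asm) sum_nonneg_eq_0_iff) auto
  then have "A p q = 0" if "p \<in> {..<d}\<times>{..<d}" "q \<in> {..<d}\<times>{..<d}" for p q
    using bpsd_entry_sq_le[OF psd that] that by simp
  then show ?thesis
    unfolding qform_def by simp
qed

section \<open>Concentration of the Kronecker--Hutchinson estimator\<close>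

lemma
  fixes f g :: "'a \<Rightarrow> real"
  assumes P: "prob_space P" and I: "finite I" "j \<in> I" "k \<in> I"
    and f: "integrable P f" and g: "integrable P g" and fg: "integrable P (\<lambda>t. f t * g t)"
  shows integrable_iid_components_mult: "integrable (PiM I (\<lambda>_. P)) (\<lambda>\<omega>. f (\<omega> j) * g (\<omega> k))"
    and integral_iid_components_mult: "(\<integral>\<omega>. f (\<omega> j) * g (\<omega> k) \<partial>PiM I (\<lambda>_. P))
      = (if j = k then \<integral>t. f t * g t \<partial>P else integral\<^sup>L P f * integral\<^sup>L P g)"
proof -
  interpret prob_space P by (rule P)
  define h where
    "h m = (\<lambda>t. if m = j \<and> m = k then f t * g t else if m = j then f t else if m = k then g t else 1)" for m
  have h: "integrable P (h m)" for m
    using f g fg unfolding h_def by (cases "m = j"; cases "m = k") simp_all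
  have "(\<Prod>m\<in>I. h m (\<omega> m)) = (\<Prod>m\<in>{j, k}. h m (\<omega> m))" for \<omega>
    using I by (intro prod.mono_neutral_right) (auto simp: h_def)
  then have prod: "(\<Prod>m\<in>I. h m (\<omega> m)) = f (\<omega> j) * g (\<omega> k)" for \<omega>
    by (cases "j = k") (simp_all add: h_def)
  have "(\<Prod>m\<in>I. integral\<^sup>L P (h m)) = (\<Prod>m\<in>{j, k}. integral\<^sup>L P (h m))"
    using I by (intro prod.mono_neutral_right) (auto simp: h_def prob_space)
  then have prod_integral: "(\<Prod>m\<in>I. integral\<^sup>L P (h m))
      = (if j = k then \<integral>t. f t * g t \<partial>P else integral\<^sup>L P f * integral\<^sup>L P g)"
    by (cases "j = k") (simp_all add: h_def)
  show "integrable (PiM I (\<lambda>_. P)) (\<lambda>\<omega>. f (\<omega> j) * g (\<omega> k))"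
    using integrable_iid_prod[of P I h, OF P I(1) h] unfolding prod .
  show "(\<integral>\<omega>. f (\<omega> j) * g (\<omega> k) \<partial>PiM I (\<lambda>_. P))
      = (if j = k then \<integral>t. f t * g t \<partial>P else integral\<^sup>L P f * integral\<^sup>L P g)"
    using integral_iid_prod[of P I h, OF P I(1) h] unfolding prod prod_integral .
qed

lemma
  fixes Y :: "'a \<Rightarrow> real"
  assumes P: "prob_space P" and Y: "integrable P Y" "integrable P (\<lambda>t. (Y t)\<^sup>2)" "integral\<^sup>L P Y = 0"
  shows integrable_iid_sum: "integrable (PiM {..<l} (\<lambda>_. P)) (\<lambda>\<omega>. \<Sum>j<l. Y (\<omega> j))"
    and integral_iid_sum: "(\<integral>\<omega>. (\<Sum>j<l. Y (\<omega> j)) \<partial>PiM {..<l} (\<lambda>_. P)) = 0"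
    and integrable_iid_sum_sq: "integrable (PiM {..<l} (\<lambda>_. P)) (\<lambda>\<omega>. (\<Sum>j<l. Y (\<omega> j))\<^sup>2)"
    and integral_iid_sum_sq:
      "(\<integral>\<omega>. (\<Sum>j<l. Y (\<omega> j))\<^sup>2 \<partial>PiM {..<l} (\<lambda>_. P)) = real l * (\<integral>t. (Y t)\<^sup>2 \<partial>P)"
proof -
  let ?M = "PiM {..<l} (\<lambda>_. P)"
  have one: "integrable P (\<lambda>_. 1 :: real)"
    using P by (simp add: prob_space_def finite_measure.integrable_const)
  have YY: "integrable P (\<lambda>t. Y t * Y t)"
    using Y(2) by (simp add: power2_eq_square)
  have comp1: "integrable ?M (\<lambda>\<omega>. Y (\<omega> j))" "(\<integral>\<omega>. Y (\<omega> j) \<partial>?M) = integral\<^sup>L P Y" if "j < l" for j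
    using integrable_iid_components_mult[where j = j and k = j, OF P finite_lessThan _ _ Y(1) one]
      integral_iid_components_mult[where j = j and k = j, OF P finite_lessThan _ _ Y(1) one] that Y(1)
    by simp_all
  note comp2 = integrable_iid_components_mult[OF P finite_lessThan _ _ Y(1) Y(1) YY]
    integral_iid_components_mult[OF P finite_lessThan _ _ Y(1) Y(1) YY]
  show "integrable ?M (\<lambda>\<omega>. \<Sum>j<l. Y (\<omega> j))"
    using comp1 by (intro Bochner_Integration.integrable_sum) auto
  show "(\<integral>\<omega>. (\<Sum>j<l. Y (\<omega> j)) \<partial>?M) = 0"
    using comp1 Y(3) by (subst Bochner_Integration.integral_sum) auto
  have sq: "(\<Sum>j<l. Y (\<omega> j))\<^sup>2 = (\<Sum>j<l. \<Sum>k<l. Y (\<omega> j) * Y (\<omega> k))" for \<omega> :: "nat \<Rightarrow> 'a"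
    by (simp add: power2_eq_square sum_product)
  show "integrable ?M (\<lambda>\<omega>. (\<Sum>j<l. Y (\<omega> j))\<^sup>2)"
    unfolding sq using comp2 by (intro Bochner_Integration.integrable_sum) auto
  show "(\<integral>\<omega>. (\<Sum>j<l. Y (\<omega> j))\<^sup>2 \<partial>?M) = real l * (\<integral>t. (Y t)\<^sup>2 \<partial>P)"
    unfolding sq using comp2 by (subst integral_sum_sum) (auto simp: Y(3) power2_eq_square sum.delta' cong: if_cong)
qed

lemma iid_sample_mean_concentration:
  fixes Q :: "'a \<Rightarrow> real"
  assumes P: "prob_space P" and Q: "integrable P Q" "integrable P (\<lambda>z. (Q z)\<^sup>2)"
    and "0 < l" "0 < a" and var: "3 * prob_space.variance P Q \<le> real l * a\<^sup>2"
  shows "2 / 3 \<le> measure (PiM {..<l} (\<lambda>_. P))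
    {\<omega> \<in> space (PiM {..<l} (\<lambda>_. P)). \<bar>1 / real l * (\<Sum>j<l. Q (\<omega> j)) - integral\<^sup>L P Q\<bar> \<le> a}"
proof -
  let ?M = "PiM {..<l} (\<lambda>_. P)"
  interpret P: prob_space P by (rule P)
  interpret M: prob_space ?M by (intro prob_space_PiM P)
  define Y where "Y = (\<lambda>z. Q z - integral\<^sup>L P Q)"
  define G where "G = (\<lambda>\<omega>. \<Sum>j<l. Y (\<omega> j))"
  have Y: "integrable P Y" "integrable P (\<lambda>z. (Y z)\<^sup>2)" "integral\<^sup>L P Y = 0"
    using Q by (auto simp: Y_def power2_diff P.prob_space)
  have G: "integrable ?M G" "M.expectation G = 0" "integrable ?M (\<lambda>\<omega>. (G \<omega>)\<^sup>2)"
      "M.variance G = real l * P.variance Q"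
    unfolding G_def using integrable_iid_sum[OF P Y] integral_iid_sum[OF P Y]
      integrable_iid_sum_sq[OF P Y] integral_iid_sum_sq[OF P Y] by (simp_all add: Y_def)
  have dev: "1 / real l * (\<Sum>j<l. Q (\<omega> j)) - integral\<^sup>L P Q = G \<omega> / real l" for \<omega>
    using \<open>0 < l\<close> by (simp add: G_def Y_def sum_subtractf field_simps)
  have "M.prob {\<omega> \<in> space ?M. real l * a \<le> \<bar>G \<omega> - M.expectation G\<bar>} \<le> M.variance G / (real l * a)\<^sup>2"
    using G \<open>0 < l\<close> \<open>0 < a\<close> by (intro M.Chebyshev_inequality) auto
  also have "\<dots> = P.variance Q / (real l * a\<^sup>2)"
    unfolding G(4) using \<open>0 < l\<close> by (simp add: power_mult_distrib power2_eq_square)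
  also have "\<dots> \<le> 1 / 3"
    using var \<open>0 < l\<close> \<open>0 < a\<close> by (simp add: divide_le_eq mult.commute)
  finally have far: "M.prob {\<omega> \<in> space ?M. real l * a \<le> \<bar>G \<omega> - M.expectation G\<bar>} \<le> 1 / 3" .
  have [measurable]: "G \<in> borel_measurable ?M"
    using G(1) by auto
  have "{\<omega> \<in> space ?M. real l * a < \<bar>G \<omega>\<bar>} \<subseteq> {\<omega> \<in> space ?M. real l * a \<le> \<bar>G \<omega> - M.expectation G\<bar>}"
    using G(2) by auto
  moreover have "{\<omega> \<in> space ?M. real l * a \<le> \<bar>G \<omega> - M.expectation G\<bar>} \<in> M.events"
    by measurable
  ultimately have bad: "M.prob {\<omega> \<in> space ?M. real l * a < \<bar>G \<omega>\<bar>} \<le> 1 / 3"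
    by (rule order_trans[OF M.finite_measure_mono far])
  have "{\<omega> \<in> space ?M. \<bar>1 / real l * (\<Sum>j<l. Q (\<omega> j)) - integral\<^sup>L P Q\<bar> \<le> a}
      = space ?M - {\<omega> \<in> space ?M. real l * a < \<bar>G \<omega>\<bar>}"
  proof -
    have "\<bar>1 / real l * (\<Sum>j<l. Q (\<omega> j)) - integral\<^sup>L P Q\<bar> \<le> a \<longleftrightarrow> \<not> real l * a < \<bar>G \<omega>\<bar>" for \<omega>
      unfolding dev using \<open>0 < l\<close> by (simp add: abs_divide divide_le_eq mult.commute not_less)
    then show ?thesis by auto
  qed
  then show ?thesis
    using bad M.prob_compl[of "{\<omega> \<in> space ?M. real l * a < \<bar>G \<omega>\<bar>}"] G(1) by simp
qed

lemma hutch_concentration: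
  fixes d :: nat and A :: bmat
  assumes \<mu>1: "has_std_moments \<mu>1 \<kappa>1" "\<kappa>1 \<le> 0" and \<mu>2: "has_std_moments \<mu>2 \<kappa>2" "\<kappa>2 \<le> 0"
    and psd: "bpsd d A" and "0 < \<epsilon>" and l: "24 / \<epsilon>\<^sup>2 \<le> real l"
  defines "P \<equiv> PiM {..<d} (\<lambda>_. \<mu>1) \<Otimes>\<^sub>M PiM {..<d} (\<lambda>_. \<mu>2)"
  shows "2 / 3 \<le> measure (PiM {..<l} (\<lambda>_. P))
    {\<omega> \<in> space (PiM {..<l} (\<lambda>_. P)). \<bar>hutch d A l \<omega> - btrace d A\<bar> \<le> \<epsilon> * btrace d A}"
proof (cases "btrace d A = 0")
  case True
  interpret M: prob_space "PiM {..<l} (\<lambda>_. P)"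
    using \<mu>1(1) \<mu>2(1) unfolding P_def by (intro prob_space_PiM prob_space_pair prob_space_PiM_std_moments)
  show ?thesis
    using True bpsd_btrace_zero_imp_qform_zero[OF psd True] by (simp add: hutch_def M.prob_space)
next
  case False
  let ?T = "btrace d A"
  have P: "prob_space P"
    using \<mu>1(1) \<mu>2(1) unfolding P_def by (intro prob_space_pair prob_space_PiM_std_moments)
  have "0 < ?T"
    using False bpsd_btrace_nonneg[OF psd] by simp
  have "0 < l"
    using l \<open>0 < \<epsilon>\<close> by (auto intro: Nat.gr0I)
  have "3 * prob_space.variance P (\<lambda>z. qform d A (kron (fst z) (snd z))) \<le> 24 * ?T\<^sup>2"
    using variance_kron_qform_le[OF \<mu>1 \<mu>2, of d A] bpsd_frob_ptr1_sym_bar_le[OF psd]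
      bpsd_frob_ptr2_sym_bar_le[OF psd] bpsd_bfrob_sym_bar_le[OF psd] unfolding P_def by linarith
  also have "\<dots> \<le> real l * (\<epsilon> * ?T)\<^sup>2"
  proof -
    have "24 \<le> real l * \<epsilon>\<^sup>2"
      using l \<open>0 < \<epsilon>\<close> by (simp add: divide_le_eq)
    then have "24 * ?T\<^sup>2 \<le> real l * \<epsilon>\<^sup>2 * ?T\<^sup>2"
      by (rule mult_right_mono) simp
    then show ?thesis
      by (simp add: power_mult_distrib mult.assoc)
  qed
  finally have var: "3 * prob_space.variance P (\<lambda>z. qform d A (kron (fst z) (snd z))) \<le> real l * (\<epsilon> * ?T)\<^sup>2" .
  show ?thesis
    using iid_sample_mean_concentration[OF P _ _ \<open>0 < l\<close> _ var]
      integrable_kron_qform[OF \<mu>1(1) \<mu>2(1)] integrable_kron_qform_sq[OF \<mu>1(1) \<mu>2(1)]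
      integral_kron_qform[OF \<mu>1(1) \<mu>2(1)] \<open>0 < ?T\<close> \<open>0 < \<epsilon>\<close>
    unfolding P_def hutch_def by simp
qed

lemma rad_vec_or_gauss_vec:
  assumes "D \<in> {rad_vec d, gauss_vec d}"
  obtains \<mu> \<kappa> where "has_std_moments \<mu> \<kappa>" "\<kappa> \<le> 0" "D = PiM {..<d} (\<lambda>_. \<mu>)"
  using assms has_std_moments_rademacher has_std_moments_std_normal
  unfolding rad_vec_def gauss_vec_def by fastforce

theorem mainTheorem5:
  shows "(\<forall>(d::nat) (A::bmat) D1 D2.
            D1 \<in> {rad_vec d, gauss_vec d} \<longrightarrow> D2 \<in> {rad_vec d, gauss_vec d} \<longrightarrow>
            prob_space.variance (pair_dist D1 D2) (\<lambda>\<omega>. qform d A (kron (fst \<omega>) (snd \<omega>)))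
              \<le> 2 * frob_sq d (ptr1 d (sym_bar A)) + 2 * frob_sq d (ptr2 d (sym_bar A))
                 + 4 * bfrob_sq d (sym_bar A))
       \<and> (\<exists>C::real. \<forall>(d::nat) (A::bmat) D1 D2 (\<epsilon>::real) (l::nat).
            D1 \<in> {rad_vec d, gauss_vec d} \<longrightarrow> D2 \<in> {rad_vec d, gauss_vec d} \<longrightarrow>
            bpsd d A \<longrightarrow> 0 < \<epsilon> \<longrightarrow> \<epsilon> < 1 \<longrightarrow> real l \<ge> C / \<epsilon>\<^sup>2 \<longrightarrow>
            measure (PiM {..<l} (\<lambda>_. pair_dist D1 D2))
               {\<omega> \<in> space (PiM {..<l} (\<lambda>_. pair_dist D1 D2)).
                  \<bar>hutch d A l \<omega> - btrace d A\<bar> \<le> \<epsilon> * btrace d A} \<ge> 2 / 3)"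
proof (intro conjI allI impI exI[of _ 24])
  fix d :: nat and A :: bmat and D1 D2
  assume "D1 \<in> {rad_vec d, gauss_vec d}" "D2 \<in> {rad_vec d, gauss_vec d}"
  then obtain \<mu>1 \<kappa>1 \<mu>2 \<kappa>2 where \<mu>1: "has_std_moments \<mu>1 \<kappa>1" "\<kappa>1 \<le> 0" "D1 = PiM {..<d} (\<lambda>_. \<mu>1)"
    and \<mu>2: "has_std_moments \<mu>2 \<kappa>2" "\<kappa>2 \<le> 0" "D2 = PiM {..<d} (\<lambda>_. \<mu>2)"
    by (metis rad_vec_or_gauss_vec)
  show "prob_space.variance (pair_dist D1 D2) (\<lambda>\<omega>. qform d A (kron (fst \<omega>) (snd \<omega>)))
      \<le> 2 * frob_sq d (ptr1 d (sym_bar A)) + 2 * frob_sq d (ptr2 d (sym_bar A)) + 4 * bfrob_sq d (sym_bar A)"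
    unfolding pair_dist_def \<mu>1(3) \<mu>2(3) by (rule variance_kron_qform_le[OF \<mu>1(1,2) \<mu>2(1,2)])
  fix \<epsilon> :: real and l :: nat
  assume "bpsd d A" "0 < \<epsilon>" "\<epsilon> < 1" "24 / \<epsilon>\<^sup>2 \<le> real l"
  then show "2 / 3 \<le> measure (PiM {..<l} (\<lambda>_. pair_dist D1 D2))
      {\<omega> \<in> space (PiM {..<l} (\<lambda>_. pair_dist D1 D2)). \<bar>hutch d A l \<omega> - btrace d A\<bar> \<le> \<epsilon> * btrace d A}"
    unfolding pair_dist_def \<mu>1(3) \<mu>2(3) by (intro hutch_concentration[OF \<mu>1(1,2) \<mu>2(1,2)])
qed

end
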